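(* Let $n\ge2$ and $r\in\{1,\dots,n-1\}$. If $C\subseteq\mathbb{F}_q^n$ is drawn uniformly at random from the set of linear codes of dimension $n-r$ that contain the all-ones vector $\mathbf{1}\in\mathbb{F}_q^n$, then $C$ has property $(\ast)$ with probability at least $1-\frac{4q^{-r/64}}{1-q^{-r/64}}$.
   Context: $H_q(x)=x\log_q(q-1)-x\log_qx-(1-x)\log_q(1-x)$ is the $q$-ary entropy function, and $H_q^{-1}$ its inverse on $[0,1-1/q]$. A subspace $V\subseteq\mathbb{F}_q^n$ is $\alpha$-sparse if it is spanned by vectors of Hamming weight at most $\alpha n$. A linear code $C\subseteq\mathbb{F}_q^n$ of dimension $n-r$ has property $(\ast)$ if, with $\alpha=H_q^{-1}(r/8n)$, for every $m\in\{1,\dots,r\}$ and every $\alpha$-sparse $m$-dimensional subspace $V\subseteq\mathbb{F}_q^n$, $\dim(C\cap V)<m/2$. *)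

theory Defs
  imports "HOL-Analysis.Analysis"
begin

definition qentropy :: "real \<Rightarrow> real \<Rightarrow> real" where
  "qentropy q x =
     (if x = 0 then 0 else x * log q (q - 1) - x * log q x)
     - (if x = 1 then 0 else (1 - x) * log q (1 - x))"

definition qentropy_inv :: "real \<Rightarrow> real \<Rightarrow> real" where
  "qentropy_inv q y = (THE x. 0 \<le> x \<and> x \<le> 1 - 1 / q \<and> qentropy q x = y)"

definition hweight :: "'a::zero ^ 'n \<Rightarrow> nat" where
  "hweight v = card {i. v $ i \<noteq> 0}"

definition sparse_subspace :: "real \<Rightarrow> ('a::field ^ 'n) set \<Rightarrow> bool" where
  "sparse_subspace \<alpha> V \<longleftrightarrow>
     (\<exists>S. V = vec.span S \<and> (\<forall>v\<in>S. real (hweight v) \<le> \<alpha> * real CARD('n)))"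

text \<open>Property (*) for a code C of redundancy r (dimension n - r), n = CARD('n).\<close>
definition prop_star :: "nat \<Rightarrow> ('a::{finite,field} ^ 'n) set \<Rightarrow> bool" where
  "prop_star r C \<longleftrightarrow>
     (let \<alpha> = qentropy_inv (real CARD('a)) (real r / (8 * real CARD('n))) in
      \<forall>m \<in> {1..r}. \<forall>V. vec.subspace V \<and> vec.dim V = m \<and> sparse_subspace \<alpha> V
          \<longrightarrow> real (vec.dim (C \<inter> V)) < real m / 2)"

definition codes_with_ones :: "nat \<Rightarrow> ('a::field ^ 'n) set set" where
  "codes_with_ones r =
     {C. vec.subspace C \<and> vec.dim C = CARD('n) - r \<and> (\<chi> i. 1) \<in> C}"

end

theory Submission
  imports Defs "HOL-Real_Asymp.Real_Asymp"
begin

text \<open>A code \<open>C\<close> violates \<open>(\<ast>)\<close> only if some \<open>m \<le> r\<close> vectors of weight at most \<open>\<alpha> n\<close> span a subspace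
  \<open>V\<close> with \<open>dim (C \<inter> V) \<ge> \<lceil>m/2\<rceil>\<close>. The Hamming ball of radius \<open>\<alpha> n\<close> has at most \<open>q\<^bsup>H\<^sub>q(\<alpha>) n\<^esup> = q\<^bsup>r/8\<^esup>\<close>
  points, so there are at most \<open>q\<^bsup>r m/8\<^esup>\<close> such spanning lists. For a fixed \<open>V\<close>, a first-moment count of
  independent tuples in \<open>C \<inter> V\<close> bounds the fraction of codes with \<open>dim (C \<inter> V) \<ge> t = \<lceil>m/2\<rceil>\<close> by about
  \<open>q\<^bsup>-s (r - m + t)\<^esup>\<close>, where \<open>s = t\<close>, or \<open>s = t - 1\<close> if \<open>1 \<in> V\<close>; in the latter case the supports of
  the spanning vectors cover all \<open>n\<close> coordinates, forcing \<open>m \<ge> 9\<close>. Either way the fraction is at most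
  \<open>q\<^bsup>-9 r m/64\<^esup>\<close>, and summing over \<open>m\<close> leaves the geometric series \<open>\<Sum>\<^sub>m q\<^bsup>-r m/64\<^esup>\<close>.\<close>

lemma qentropy_eq: "qentropy q x = x * log q (q - 1) - x * log q x - (1 - x) * log q (1 - x)"
  unfolding qentropy_def by auto

lemma qentropy_eq_ln: "qentropy q x = (x * ln (q - 1) - x * ln x - (1 - x) * ln (1 - x)) / ln q"
  by (simp add: qentropy_eq log_def diff_divide_distrib)

lemma qentropy_ge_self:
  fixes q x :: real
  assumes q: "q \<ge> 2" and x: "0 \<le> x" "x \<le> 1 - 1/q"
  shows "x \<le> qentropy q x"
proof (cases "x = 0")
  case True
  then show ?thesis by (simp add: qentropy_eq)
next
  case False
  hence x0: "x > 0" using x by auto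
  have x1: "x < 1" using x q by (smt (verit) divide_pos_pos)
  have "log q (1 - x) \<le> 0" using x0 x1 q by (simp add: log_le_zero_cancel_iff)
  hence nonpos: "(1 - x) * log q (1 - x) \<le> 0" using x1 by (simp add: mult_nonneg_nonpos)
  have "x * q \<le> q - 1" using x q by (simp add: field_simps)
  hence "q \<le> (q - 1) / x" using x0 by (simp add: field_simps)
  hence "log q q \<le> log q ((q - 1) / x)" using q x0 by (subst log_le_cancel_iff) auto
  hence "1 \<le> log q (q - 1) - log q x" using q x0 by (simp add: log_divide)
  hence "x \<le> x * (log q (q - 1) - log q x)" using x0
    by (metis mult.right_neutral mult_left_mono less_imp_le)
  thus ?thesis using nonpos by (simp add: qentropy_eq algebra_simps)
qed

lemma has_real_derivative_qentropy:
  fixes q x :: real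
  assumes q: "q \<ge> 2" and x: "0 < x" "x < 1"
  shows "(qentropy q has_real_derivative (ln (q - 1) - ln x + ln (1 - x)) / ln q) (at x)"
proof -
  have "qentropy q = (\<lambda>x. (x * ln (q - 1) - x * ln x - (1 - x) * ln (1 - x)) / ln q)"
    by (simp add: qentropy_eq_ln [abs_def])
  moreover have "((\<lambda>x. (x * ln (q - 1) - x * ln x - (1 - x) * ln (1 - x)) / ln q) has_real_derivative
        (1 * ln (q - 1) - (1 * ln x + x * (1 / x)) - ((-1) * ln (1 - x) + (1 - x) * (-1 / (1 - x)))) / ln q)
        (at x)"
    using x q by (auto intro!: derivative_eq_intros)
  moreover have "(1 * ln (q - 1) - (1 * ln x + x * (1 / x)) - ((-1) * ln (1 - x) + (1 - x) * (-1 / (1 - x)))) / ln q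
      = (ln (q - 1) - ln x + ln (1 - x)) / ln q"
    using x by (simp add: divide_simps)
  ultimately show ?thesis by (simp only:)
qed

lemma continuous_on_qentropy:
  fixes q :: real
  assumes q: "q \<ge> 2"
  shows "continuous_on {0..1 - 1/q} (qentropy q)"
proof (clarsimp simp: continuous_on_eq_continuous_within)
  fix x assume x: "0 \<le> x" "x \<le> 1 - 1/q"
  have lt1: "1 - 1/q < 1" using q by simp
  show "continuous (at x within {0..1 - 1/q}) (qentropy q)"
  proof (cases "x = 0")
    case False
    with x lt1 have "0 < x" "x < 1" by linarith+
    from DERIV_isCont [OF has_real_derivative_qentropy [OF q this]]
    show ?thesis by (simp add: continuous_at_imp_continuous_within)
  next
    case True
    have "((\<lambda>x::real. x * ln x) \<longlongrightarrow> 0) (at_right 0)"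
      by real_asymp
    moreover have "((\<lambda>x::real. (1 - x) * ln (1 - x)) \<longlongrightarrow> (1 - 0) * ln (1 - 0)) (at_right 0)"
      by (intro tendsto_intros) auto
    ultimately have "((\<lambda>x. (x * ln (q - 1) - x * ln x - (1 - x) * ln (1 - x)) / ln q) \<longlongrightarrow>
           (0 * ln (q - 1) - 0 - (1 - 0) * ln (1 - 0)) / ln q) (at_right 0)"
      by (intro tendsto_intros) (use q in auto)
    hence "(qentropy q \<longlongrightarrow> qentropy q 0) (at_right 0)"
      by (simp add: qentropy_eq_ln [abs_def] qentropy_eq)
    thus ?thesis using True q by (simp add: continuous_within at_within_Icc_at_right)
  qed
qed

lemma qentropy_strict_mono:
  fixes q a b :: real
  assumes q: "q \<ge> 2" and ab: "0 \<le> a" "a < b" "b \<le> 1 - 1/q"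
  shows "qentropy q a < qentropy q b"
proof (rule DERIV_pos_imp_increasing_open [OF ab(2)])
  show "continuous_on {a..b} (qentropy q)"
    by (rule continuous_on_subset [OF continuous_on_qentropy [OF q]]) (use ab in auto)
next
  fix x assume x: "a < x" "x < b"
  have "1 - 1/q < 1" using q by simp
  hence x01: "0 < x" "x < 1" using x ab by linarith+
  have "b * q \<le> q - 1" using ab q by (simp add: field_simps)
  moreover have "x * q < b * q" using x q by simp
  ultimately have "x < (q - 1) * (1 - x)" by (simp add: algebra_simps)
  hence "ln x < ln ((q - 1) * (1 - x))" using x01 by simp
  hence "0 < (ln (q - 1) - ln x + ln (1 - x)) / ln q" using x01 q by (simp add: ln_mult)
  thus "\<exists>y. (qentropy q has_real_derivative y) (at x) \<and> 0 < y"
    using has_real_derivative_qentropy [OF q x01] by blast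
qed

lemma qentropy_inv_spec:
  fixes q y :: real
  assumes q: "q \<ge> 2" and y: "0 \<le> y" "y \<le> 1/2"
  shows "0 \<le> qentropy_inv q y \<and> qentropy_inv q y \<le> 1 - 1/q \<and> qentropy q (qentropy_inv q y) = y"
proof -
  have half: "1/2 \<le> 1 - 1/q" using q by (simp add: field_simps)
  have "1 - 1/q \<le> qentropy q (1 - 1/q)" by (rule qentropy_ge_self [OF q]) (use half in auto)
  hence "qentropy q 0 \<le> y" "y \<le> qentropy q (1 - 1/q)" using y half by (simp_all add: qentropy_eq)
  then obtain x where x: "0 \<le> x" "x \<le> 1 - 1/q" "qentropy q x = y"
    using IVT' [OF _ _ _ continuous_on_qentropy [OF q]] half by fastforce
  have "\<exists>!x. 0 \<le> x \<and> x \<le> 1 - 1/q \<and> qentropy q x = y"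
  proof (rule ex1I [of _ x])
    fix z assume z: "0 \<le> z \<and> z \<le> 1 - 1/q \<and> qentropy q z = y"
    show "z = x"
      using qentropy_strict_mono [OF q] z x by (metis linorder_neqE_linordered_idom less_irrefl)
  qed (use x in auto)
  from theI' [OF this] show ?thesis unfolding qentropy_inv_def .
qed

lemma qentropy_inv_pos_le:
  fixes q y :: real
  assumes q: "q \<ge> 2" and y: "0 < y" "y \<le> 1/2"
  shows "0 < qentropy_inv q y" and "qentropy_inv q y \<le> y"
proof -
  have inv: "0 \<le> qentropy_inv q y" "qentropy_inv q y \<le> 1 - 1/q" "qentropy q (qentropy_inv q y) = y"
    using qentropy_inv_spec [OF q] y by auto
  show "qentropy_inv q y \<le> y" using qentropy_ge_self [OF q inv(1,2)] inv(3) by simp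
  show "0 < qentropy_inv q y"
    using inv y by (cases "qentropy_inv q y = 0") (auto simp: qentropy_eq)
qed

lemma two_le_card_field: "2 \<le> CARD('a::{finite,field})"
proof -
  have "card {0::'a, 1} \<le> card (UNIV::'a set)" by (rule card_mono) auto
  thus ?thesis by simp
qed

lemma sum_prod_vec_nth:
  fixes p :: "'a::finite \<Rightarrow> real"
  shows "(\<Sum>v::'a^'n\<in>UNIV. \<Prod>i\<in>UNIV. p (v$i)) = (\<Sum>x\<in>UNIV. p x) ^ CARD('n)"
proof -
  have b: "bij_betw vec_nth (UNIV::('a^'n) set) (UNIV::('n \<Rightarrow> 'a) set)"
    by (intro bij_betwI [of _ _ _ vec_lambda]) (auto simp: vec_eq_iff)
  have "(\<Sum>v::'a^'n\<in>UNIV. \<Prod>i\<in>UNIV. p (v$i)) = (\<Sum>g\<in>(UNIV::('n \<Rightarrow> 'a) set). \<Prod>i\<in>UNIV. p (g i))"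
    using sum.reindex_bij_betw [OF b, of "\<lambda>g. \<Prod>i\<in>UNIV. p (g i)"] by simp
  also have "\<dots> = (\<Prod>i\<in>(UNIV::'n set). \<Sum>x\<in>UNIV. p x)"
    using prod_sum_PiE [of "UNIV::'n set" "\<lambda>_. UNIV::'a set" "\<lambda>_ x. p x"] by (simp add: PiE_UNIV)
  finally show ?thesis by simp
qed

text \<open>The Chernoff-type estimate behind the volume bound: with \<open>p\<close> the distribution on \<open>'a\<close>
  giving mass \<open>1 - \<alpha>\<close> to \<open>0\<close> and \<open>\<alpha>/(q - 1)\<close> to every other letter, each vector of weight
  \<open>w \<le> \<alpha> N\<close> has product probability at least \<open>q powr (- H\<^sub>q(\<alpha>) N)\<close>.\<close>
lemma entropy_weight_lower_bound:
  fixes q \<alpha> :: real and w N :: nat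
  assumes q: "q \<ge> 2" and \<alpha>: "0 < \<alpha>" "\<alpha> \<le> 1 - 1/q" and w: "w \<le> N" "real w \<le> \<alpha> * N"
  shows "1 \<le> (1 - \<alpha>) ^ (N - w) * (\<alpha> / (q - 1)) ^ w * q powr (qentropy q \<alpha> * N)"
proof -
  have \<alpha>1: "\<alpha> < 1" using \<alpha> q by (smt (verit) divide_pos_pos)
  have "\<alpha> * q \<le> q - 1" using \<alpha>(2) q by (simp add: field_simps)
  hence "\<alpha> / (q - 1) \<le> 1 - \<alpha>" using q by (simp add: field_simps)
  hence "ln (\<alpha> / (q - 1)) \<le> ln (1 - \<alpha>)" using \<alpha> \<alpha>1 q by (subst ln_le_cancel_iff) auto
  hence "ln \<alpha> - ln (q - 1) \<le> ln (1 - \<alpha>)" using \<alpha> q by (simp add: ln_div)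
  hence "0 \<le> (\<alpha> * N - w) * (ln (1 - \<alpha>) - (ln \<alpha> - ln (q - 1)))"
    using w by (simp add: mult_nonneg_nonneg)
  also have "\<dots> = real (N - w) * ln (1 - \<alpha>) + real w * ln (\<alpha> / (q - 1)) + N * (qentropy q \<alpha> * ln q)"
  proof -
    have "qentropy q \<alpha> * ln q = \<alpha> * ln (q - 1) - \<alpha> * ln \<alpha> - (1 - \<alpha>) * ln (1 - \<alpha>)"
      using q by (simp add: qentropy_eq_ln)
    thus ?thesis using w \<alpha> q by (simp only:) (simp add: ln_div of_nat_diff algebra_simps)
  qed
  finally have "1 \<le> exp (real (N - w) * ln (1 - \<alpha>) + real w * ln (\<alpha> / (q - 1)) + N * (qentropy q \<alpha> * ln q))"
    by simp
  also have "\<dots> = (1 - \<alpha>) ^ (N - w) * (\<alpha> / (q - 1)) ^ w * q powr (qentropy q \<alpha> * N)"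
    using \<alpha> \<alpha>1 q by (simp add: exp_add exp_of_nat_mult powr_def mult_ac)
  finally show ?thesis .
qed

lemma card_hamming_ball_le:
  fixes \<alpha> :: real
  defines "q \<equiv> real CARD('a::{finite,field})"
  assumes \<alpha>: "0 < \<alpha>" "\<alpha> \<le> 1 - 1/q"
  shows "real (card {v::'a^'n. real (hweight v) \<le> \<alpha> * CARD('n)}) \<le> q powr (qentropy q \<alpha> * CARD('n))"
proof -
  define N where "N = CARD('n)"
  define p :: "'a \<Rightarrow> real" where "p x = (if x = 0 then 1 - \<alpha> else \<alpha> / (q - 1))" for x
  have q: "q \<ge> 2" unfolding q_def using two_le_card_field [where 'a='a] by simp
  have \<alpha>1: "\<alpha> < 1" using \<alpha> q by (smt (verit) divide_pos_pos)
  have p_nonneg: "0 \<le> p x" for x using \<alpha> \<alpha>1 q by (simp add: p_def)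
  have "(\<Sum>x\<in>UNIV. p x) = p 0 + (\<Sum>x\<in>UNIV - {0::'a}. \<alpha> / (q - 1))"
    using sum.remove [of UNIV 0 p] by (simp add: p_def)
  also have "\<dots> = 1" using q by (simp add: p_def q_def card_Diff_singleton of_nat_diff)
  finally have sum_p: "(\<Sum>x\<in>UNIV. p x) = 1" .
  have prod_p: "(\<Prod>i\<in>UNIV. p (v$i)) = (1 - \<alpha>) ^ (N - hweight v) * (\<alpha> / (q - 1)) ^ hweight v"
    for v :: "'a^'n"
  proof -
    have "card (- {i. v$i \<noteq> 0}) = N - hweight v"
      by (simp add: hweight_def N_def Compl_eq_Diff_UNIV card_Diff_subset)
    moreover have "UNIV \<inter> {i. v$i = 0} = - {i. v$i \<noteq> 0}" by auto
    ultimately show ?thesis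
      by (simp add: p_def prod.If_cases hweight_def)
  qed
  let ?B = "{v::'a^'n. real (hweight v) \<le> \<alpha> * N}"
  have "real (card ?B) = (\<Sum>v\<in>?B. 1)" by simp
  also have "\<dots> \<le> (\<Sum>v\<in>?B. (\<Prod>i\<in>UNIV. p (v$i)) * q powr (qentropy q \<alpha> * N))"
  proof (rule sum_mono)
    fix v assume "v \<in> ?B"
    moreover have "hweight v \<le> N" unfolding hweight_def N_def by (rule card_mono) auto
    ultimately show "1 \<le> (\<Prod>i\<in>UNIV. p (v$i)) * q powr (qentropy q \<alpha> * N)"
      using entropy_weight_lower_bound [OF q \<alpha>] by (simp add: prod_p)
  qed
  also have "\<dots> \<le> (\<Sum>v::'a^'n\<in>UNIV. (\<Prod>i\<in>UNIV. p (v$i)) * q powr (qentropy q \<alpha> * N))"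
    by (rule sum_mono2) (auto intro!: mult_nonneg_nonneg prod_nonneg p_nonneg)
  also have "\<dots> = q powr (qentropy q \<alpha> * N)"
    by (simp add: sum_distrib_right [symmetric] sum_prod_vec_nth sum_p)
  finally show ?thesis unfolding N_def .
qed

lemma card_span_independent:
  fixes B :: "('a::{finite,field} ^ 'n) set"
  assumes ind: "vec.independent B"
  shows "card (vec.span B) = CARD('a) ^ card B"
proof -
  have fin: "finite B" using ind vec.independent_bound_general by blast
  define f where "f u = (\<Sum>v\<in>B. u v *s v)" for u :: "'a^'n \<Rightarrow> 'a"
  have "vec.span B = range f" unfolding f_def by (rule vec.span_finite [OF fin])
  also have "\<dots> = f ` (B \<rightarrow>\<^sub>E UNIV)"
  proof
    show "range f \<subseteq> f ` (B \<rightarrow>\<^sub>E UNIV)"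
    proof
      fix y assume "y \<in> range f"
      then obtain u where y: "y = f u" by auto
      have "f u = f (restrict u B)" unfolding f_def by (rule sum.cong) auto
      thus "y \<in> f ` (B \<rightarrow>\<^sub>E UNIV)" using y by auto
    qed
  qed auto
  finally have span_eq: "vec.span B = f ` (B \<rightarrow>\<^sub>E UNIV)" .
  have "inj_on f (B \<rightarrow>\<^sub>E UNIV)"
  proof (rule inj_onI)
    fix u u' assume u: "u \<in> B \<rightarrow>\<^sub>E UNIV" "u' \<in> B \<rightarrow>\<^sub>E UNIV" and "f u = f u'"
    hence "(\<Sum>v\<in>B. (u v - u' v) *s v) = 0"
      unfolding f_def by (simp add: vec.scale_left_diff_distrib sum_subtractf)
    hence "\<forall>v\<in>B. u v - u' v = 0"
      using ind unfolding vec.independent_explicit by (metis fin)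
    thus "u = u'" using u by (intro PiE_ext) auto
  qed
  hence "card (vec.span B) = card (B \<rightarrow>\<^sub>E (UNIV::'a set))" unfolding span_eq by (rule card_image)
  also have "\<dots> = CARD('a) ^ card B" by (simp add: card_funcsetE fin)
  finally show ?thesis .
qed

lemma card_span_le:
  fixes S :: "('a::{finite,field} ^ 'n) set"
  shows "card (vec.span S) \<le> CARD('a) ^ card S"
proof -
  obtain B where B: "B \<subseteq> S" "vec.independent B" "S \<subseteq> vec.span B"
    using vec.maximal_independent_subset by blast
  have "vec.span S = vec.span B"
    using B by (metis vec.span_mono vec.span_span subset_antisym)
  moreover have "card B \<le> card S" using B(1) by (rule card_mono [OF finite])
  ultimately show ?thesis using card_span_independent [OF B(2)]
    by (simp add: power_increasing two_le_card_field)
qed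

lemma card_subspace:
  fixes X :: "('a::{finite,field} ^ 'n) set"
  assumes "vec.subspace X"
  shows "card X = CARD('a) ^ vec.dim X"
proof -
  obtain B where B: "B \<subseteq> X" "vec.independent B" "X \<subseteq> vec.span B" "card B = vec.dim X"
    using vec.basis_exists by blast
  have "vec.span B = X" using B assms by (intro vec.span_subspace) auto
  thus ?thesis using card_span_independent [OF B(2)] B(4) by simp
qed

definition independent_extension :: "('a::field ^ 'n) set \<Rightarrow> ('a ^ 'n) list \<Rightarrow> bool" where
  "independent_extension E w \<longleftrightarrow> (\<forall>i<length w. w!i \<notin> vec.span (E \<union> set (take i w)))"

lemma independent_extension_Nil [simp]: "independent_extension E []"
  by (simp add: independent_extension_def)

lemma independent_extension_snoc:
  "independent_extension E (w @ [v]) \<longleftrightarrow> independent_extension E w \<and> v \<notin> vec.span (E \<union> set w)"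
  by (auto simp: independent_extension_def nth_append less_Suc_eq)

lemma independent_extension_independent:
  assumes "vec.independent E" "independent_extension E w"
  shows "vec.independent (E \<union> set w)" and "card (E \<union> set w) = card E + length w"
proof -
  have "vec.independent (E \<union> set w) \<and> card (E \<union> set w) = card E + length w"
    using assms(2)
  proof (induction w rule: rev_induct)
    case Nil
    then show ?case using assms(1) by simp
  next
    case (snoc v w)
    have ext: "independent_extension E w" and v: "v \<notin> vec.span (E \<union> set w)"
      using snoc.prems by (auto simp: independent_extension_snoc)
    have IH: "vec.independent (E \<union> set w)" "card (E \<union> set w) = card E + length w"
      using snoc.IH [OF ext] by auto
    have "v \<notin> E \<union> set w" using v vec.span_base by blast
    moreover have "finite (E \<union> set w)" using IH(1) vec.independent_bound_general by blast
    moreover have "E \<union> set (w @ [v]) = insert v (E \<union> set w)" by auto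
    ultimately show ?case using IH v by (simp add: vec.independent_insert)
  qed
  thus "vec.independent (E \<union> set w)" "card (E \<union> set w) = card E + length w" by auto
qed

definition qfall :: "real \<Rightarrow> real \<Rightarrow> nat \<Rightarrow> nat \<Rightarrow> real" where
  "qfall q Q e k = (\<Prod>i<k. Q - q ^ (e + i))"

lemma qfall_add: "qfall q Q e (a + b) = qfall q Q e a * qfall q Q (e + a) b"
proof -
  have "(\<Prod>i<a + b. f i) = (\<Prod>i<a. f i) * (\<Prod>i<b. f (a + i))" for f :: "nat \<Rightarrow> real"
    by (induction b) (auto simp: mult_ac)
  thus ?thesis unfolding qfall_def by (simp add: add.assoc)
qed

lemma qfall_pos: "q > 1 \<Longrightarrow> e + k \<le> j \<Longrightarrow> qfall q (q ^ j) e k > 0"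
  unfolding qfall_def by (intro prod_pos) (auto intro!: power_strict_increasing)

lemma card_independent_extensions:
  fixes X E :: "('a::{finite,field} ^ 'n) set"
  assumes X: "vec.subspace X" and EX: "E \<subseteq> X" and ind: "vec.independent E"
    and dim: "card E + k \<le> vec.dim X"
  shows "real (card {w. length w = k \<and> set w \<subseteq> X \<and> independent_extension E w})
      = qfall (real CARD('a)) (real (card X)) (card E) k"
  using dim
proof (induction k)
  case 0
  have "{w. length w = 0 \<and> set w \<subseteq> X \<and> independent_extension E w} = {[]}" by auto
  then show ?case by (simp add: qfall_def)
next
  case (Suc k)
  define A where "A k = {w. length w = k \<and> set w \<subseteq> X \<and> independent_extension E w}" for k
  have "A (Suc k) = (\<lambda>(w, v). w @ [v]) ` (SIGMA w:A k. X - vec.span (E \<union> set w))"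
  proof (intro set_eqI iffI)
    fix u assume u: "u \<in> A (Suc k)"
    then obtain w v where wv: "u = w @ [v]" "length w = k"
      unfolding A_def by (metis (mono_tags) length_Suc_conv_rev mem_Collect_eq)
    thus "u \<in> (\<lambda>(w, v). w @ [v]) ` (SIGMA w:A k. X - vec.span (E \<union> set w))"
      using u unfolding A_def by (intro image_eqI [of _ _ "(w, v)"]) (auto simp: independent_extension_snoc)
  qed (auto simp: A_def independent_extension_snoc)
  moreover have "inj_on (\<lambda>(w, v). w @ [v]) (SIGMA w:A k. X - vec.span (E \<union> set w))"
    by (auto simp: inj_on_def)
  ultimately have "card (A (Suc k)) = card (SIGMA w:A k. X - vec.span (E \<union> set w))"
    by (simp add: card_image)
  also have "\<dots> = (\<Sum>w\<in>A k. card (X - vec.span (E \<union> set w)))"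
    by (rule card_SigmaI)
      (auto intro: finite_subset [OF _ finite_lists_length_eq [OF finite [of X], of k]] simp: A_def)
  also have "\<dots> = (\<Sum>w\<in>A k. card X - CARD('a) ^ (card E + k))"
  proof (rule sum.cong [OF refl])
    fix w assume w: "w \<in> A k"
    hence "vec.span (E \<union> set w) \<subseteq> X" using EX X unfolding A_def by (intro vec.span_minimal) auto
    moreover have "card (vec.span (E \<union> set w)) = CARD('a) ^ (card E + k)"
      using w independent_extension_independent [OF ind] card_span_independent
      unfolding A_def by (metis (mono_tags, lifting) mem_Collect_eq)
    ultimately show "card (X - vec.span (E \<union> set w)) = card X - CARD('a) ^ (card E + k)"
      by (simp add: card_Diff_subset)
  qed
  finally have "card (A (Suc k)) = card (A k) * (card X - CARD('a) ^ (card E + k))" by simp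
  moreover have "CARD('a) ^ (card E + k) \<le> card X"
    unfolding card_subspace [OF X] using Suc.prems two_le_card_field [where 'a='a]
    by (intro power_increasing) auto
  ultimately show ?case using Suc unfolding A_def by (simp add: qfall_def of_nat_diff)
qed

lemma span_eq_if_independent_extension:
  fixes E :: "('a::{finite,field} ^ 'n) set"
  assumes ind: "vec.independent E"
    and C: "vec.subspace C" "vec.dim C = card E + length w" "E \<subseteq> C"
    and w: "set w \<subseteq> C" "independent_extension E w"
  shows "C = vec.span (E \<union> set w)"
proof -
  note I = independent_extension_independent [OF ind w(2)]
  have "finite (E \<union> set w)" using I(1) vec.independent_bound_general by blast
  hence "C \<subseteq> vec.span (E \<union> set w)"
    using vec.card_eq_dim [of "E \<union> set w" C] I C w by auto
  moreover have "vec.span (E \<union> set w) \<subseteq> C" using C w by (intro vec.span_minimal) auto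
  ultimately show ?thesis by auto
qed

text \<open>Double counting of the independent extensions of \<open>E\<close> of length \<open>j - |E|\<close>: in the whole space,
  and grouped by the \<open>j\<close>-dimensional subspace they span.\<close>
lemma card_subspaces_containing:
  fixes E :: "('a::{finite,field} ^ 'n) set"
  defines "q \<equiv> real CARD('a)"
  assumes ind: "vec.independent E" and Ej: "card E \<le> j" and jN: "j \<le> CARD('n)"
  shows "real (card {C. vec.subspace C \<and> vec.dim C = j \<and> E \<subseteq> C}) * qfall q (q ^ j) (card E) (j - card E)
       = qfall q (q ^ CARD('n)) (card E) (j - card E)"
proof -
  define k where "k = j - card E"
  define T where "T X = {w. length w = k \<and> set w \<subseteq> X \<and> independent_extension E w}" for X :: "('a^'n) set"
  define SC where "SC = {C. vec.subspace C \<and> vec.dim C = j \<and> E \<subseteq> C}"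
  have jk: "j = card E + k" unfolding k_def using Ej by simp
  have card_T: "real (card (T C)) = qfall q (q ^ j) (card E) k" if "C \<in> SC" for C
    using that card_independent_extensions [of C E k] card_subspace [of C] ind
    unfolding SC_def T_def q_def by (simp add: jk)
  have "T UNIV = (\<Union>C\<in>SC. T C)"
  proof (intro set_eqI iffI)
    fix w assume w: "w \<in> T UNIV"
    hence ext: "independent_extension E w" "length w = k" unfolding T_def by auto
    note I = independent_extension_independent [OF ind ext(1)]
    have "vec.span (E \<union> set w) \<in> SC"
      unfolding SC_def using I ext vec.span_superset [of "E \<union> set w"]
      by (auto simp: vec.dim_eq_card_independent jk)
    moreover have "w \<in> T (vec.span (E \<union> set w))"
      using w vec.span_superset [of "E \<union> set w"] unfolding T_def by auto
    ultimately show "w \<in> (\<Union>C\<in>SC. T C)" by blast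
  qed (auto simp: T_def)
  moreover have "C = vec.span (E \<union> set w)" if "C \<in> SC" "w \<in> T C" for C w
    using that unfolding SC_def T_def by (intro span_eq_if_independent_extension [OF ind]) (auto simp: jk)
  hence "T C \<inter> T C' = {}" if "C \<in> SC" "C' \<in> SC" "C \<noteq> C'" for C C'
    using that by blast
  moreover have "finite (T C)" for C
    by (rule finite_subset [OF _ finite_lists_length_eq [OF finite [of UNIV], of k]]) (auto simp: T_def)
  ultimately have "real (card (T UNIV)) = (\<Sum>C\<in>SC. real (card (T C)))"
    by (simp add: card_UN_disjoint)
  also have "\<dots> = real (card SC) * qfall q (q ^ j) (card E) k"
    using card_T by simp
  finally have "real (card SC) * qfall q (q ^ j) (card E) k = real (card (T UNIV))" ..
  also have "\<dots> = qfall q (q ^ CARD('n)) (card E) k"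
    using card_independent_extensions [of UNIV E k] ind jN jk vec_dim_card [where 'a='a and 'n='n]
    unfolding T_def q_def by (simp add: CARD_vec)
  finally show ?thesis unfolding SC_def k_def .
qed

abbreviation ones :: "'a::field ^ 'n" where "ones \<equiv> (\<chi> i. 1)"

lemma independent_ones: "vec.independent {ones :: 'a::field ^ 'n}"
proof -
  have "ones \<noteq> (0 :: 'a ^ 'n)" by (simp add: vec_eq_iff)
  thus ?thesis by (simp add: vec.independent_insert vec.span_empty)
qed

lemma codes_with_ones_eq:
  "(codes_with_ones r :: ('a::field ^ 'n) set set) = {C. vec.subspace C \<and> vec.dim C = CARD('n) - r \<and> {ones} \<subseteq> C}"
  unfolding codes_with_ones_def by auto

lemma card_codes_with_ones_pos:
  assumes "r < CARD('n)"
  shows "card (codes_with_ones r :: ('a::{finite,field} ^ 'n) set set) > 0"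
proof -
  define j where "j = CARD('n) - r"
  define q where "q = real CARD('a)"
  have q1: "q > 1" unfolding q_def using two_le_card_field [where 'a='a] by simp
  have j: "1 \<le> j" "j \<le> CARD('n)" using assms unfolding j_def by auto
  have "real (card (codes_with_ones r :: ('a ^ 'n) set set)) * qfall q (q ^ j) 1 (j - 1)
      = qfall q (q ^ CARD('n)) 1 (j - 1)"
    using card_subspaces_containing [OF independent_ones [where 'a='a and 'n='n], of j] j
    unfolding codes_with_ones_eq q_def j_def by simp
  moreover have "qfall q (q ^ CARD('n)) 1 (j - 1) > 0" using q1 j by (intro qfall_pos) auto
  ultimately show ?thesis by (metis gr0I less_irrefl mult_eq_0_iff of_nat_0)
qed

lemma qfall_scale_le:
  fixes q :: real
  assumes q: "q > 1" and "r + j = N" "e + s \<le> j"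
  shows "qfall q (q ^ j) e s * q ^ (r * s) \<le> qfall q (q ^ N) e s"
proof -
  have "qfall q (q ^ j) e s * q ^ (r * s) = (\<Prod>i<s. q ^ r * (q ^ j - q ^ (e + i)))"
    unfolding qfall_def by (simp add: prod.distrib power_mult mult_ac)
  also have "\<dots> \<le> (\<Prod>i<s. q ^ N - q ^ (e + i))"
  proof (rule prod_mono, rule conjI)
    fix i assume "i \<in> {..<s}"
    hence "q ^ (e + i) \<le> q ^ j" and "q ^ r * q ^ (e + i) \<le> q ^ N"
      using assms unfolding power_add [symmetric] by (auto intro!: power_increasing)
    moreover have "q ^ (e + i) \<le> q ^ r * q ^ (e + i)" using q by simp
    ultimately show "0 \<le> q ^ r * (q ^ j - q ^ (e + i))" "q ^ r * (q ^ j - q ^ (e + i)) \<le> q ^ N - q ^ (e + i)"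
      using q assms by (simp_all add: right_diff_distrib power_add [symmetric])
  qed
  finally show ?thesis unfolding qfall_def .
qed

lemma card_codes_containing_le:
  fixes w :: "('a::{finite,field} ^ 'n) list"
  assumes r: "r < CARD('n)" and w: "independent_extension {ones} w"
  shows "real (card {C \<in> codes_with_ones r. set w \<subseteq> C}) * real CARD('a) ^ (r * length w)
         \<le> real (card (codes_with_ones r :: ('a ^ 'n) set set))"
proof -
  define j where "j = CARD('n) - r"
  define q where "q = real CARD('a)"
  define s where "s = length w"
  define E where "E = {ones} \<union> set w"
  define c1 where "c1 = real (card (codes_with_ones r :: ('a ^ 'n) set set))"
  define c2 where "c2 = real (card {C \<in> codes_with_ones r. set w \<subseteq> C})"
  have q1: "q > 1" unfolding q_def using two_le_card_field [where 'a='a] by simp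
  have rj: "r + j = CARD('n)" using r unfolding j_def by simp
  have E: "vec.independent E" "card E = 1 + s"
    using independent_extension_independent [OF independent_ones w] unfolding E_def s_def by auto
  have c2_eq: "{C \<in> codes_with_ones r. set w \<subseteq> C} = {C. vec.subspace C \<and> vec.dim C = j \<and> E \<subseteq> C}"
    unfolding codes_with_ones_def E_def j_def by auto
  show ?thesis
  proof (cases "1 + s \<le> j")
    case False
    hence "{C \<in> codes_with_ones r. set w \<subseteq> C} = {}"
      using vec.independent_card_le_dim [of E] E unfolding c2_eq by force
    thus ?thesis by (simp only: card.empty)
  next
    case True
    txt \<open>Counting codes through \<open>{1}\<close> and through \<open>E\<close> and cancelling the common factors shows
      \<open>c2 / c1 = qfall q (q\<^sup>j) 1 s / qfall q (q\<^sup>n) 1 s\<close>, and each factor of that ratio is at most \<open>q\<^sup>-\<^sup>r\<close>.\<close>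
    define k where "k = j - 1 - s"
    have jsk: "j - 1 = s + k" unfolding k_def using True by simp
    have "c1 * qfall q (q ^ j) 1 (j - 1) = qfall q (q ^ CARD('n)) 1 (j - 1)"
      using card_subspaces_containing [OF independent_ones [where 'a='a and 'n='n], of j] True rj
      unfolding c1_def codes_with_ones_eq q_def j_def by simp
    hence c1_eq: "c1 * qfall q (q ^ j) 1 s * qfall q (q ^ j) (1 + s) k
        = qfall q (q ^ CARD('n)) 1 s * qfall q (q ^ CARD('n)) (1 + s) k"
      unfolding jsk qfall_add by (simp add: mult_ac)
    have "c2 * qfall q (q ^ j) (1 + s) k = qfall q (q ^ CARD('n)) (1 + s) k"
      using card_subspaces_containing [OF E(1), of j] True rj
      unfolding c2_def c2_eq q_def k_def E(2) by simp
    with c1_eq have "c1 * qfall q (q ^ j) 1 s * qfall q (q ^ j) (1 + s) k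
        = c2 * qfall q (q ^ CARD('n)) 1 s * qfall q (q ^ j) (1 + s) k"
      by (simp add: mult_ac)
    moreover have "qfall q (q ^ j) (1 + s) k > 0" using q1 True by (intro qfall_pos) (auto simp: k_def)
    ultimately have c1_c2: "c1 * qfall q (q ^ j) 1 s = c2 * qfall q (q ^ CARD('n)) 1 s" by simp
    have "c2 * q ^ (r * s) * qfall q (q ^ j) 1 s \<le> c2 * qfall q (q ^ CARD('n)) 1 s"
      using mult_left_mono [OF qfall_scale_le [OF q1 rj, of 1 s], of c2] True
      unfolding c2_def by (simp add: mult_ac)
    also have "\<dots> = c1 * qfall q (q ^ j) 1 s" using c1_c2 by simp
    finally have "c2 * q ^ (r * s) \<le> c1" using qfall_pos [OF q1, of 1 s j] True by simp
    thus ?thesis unfolding c1_def c2_def q_def s_def .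
  qed
qed

lemma independent_extension_insert:
  fixes V :: "('a::field ^ 'n) set"
  assumes V: "vec.subspace V" "E \<subseteq> V" "set w \<subseteq> V" and u: "u \<notin> V"
    and w: "independent_extension E w"
  shows "independent_extension (insert u E) w"
  unfolding independent_extension_def
proof (intro allI impI notI)
  fix i assume i: "i < length w" and "w!i \<in> vec.span (insert u E \<union> set (take i w))"
  then obtain k where k: "w!i - k *s u \<in> vec.span (E \<union> set (take i w))"
    by (auto simp: vec.span_insert)
  have "vec.span (E \<union> set (take i w)) \<subseteq> V"
    using V by (intro vec.span_minimal) (auto dest: in_set_takeD)
  moreover have "w!i \<in> V" using V(3) i by auto
  ultimately have "w!i - (w!i - k *s u) \<in> V" using k V(1) by (meson subsetD vec.subspace_diff)
  hence ku: "k *s u \<in> V" by simp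
  show False
  proof (cases "k = 0")
    case True
    with k w i show False by (simp add: independent_extension_def)
  next
    case False
    hence "inverse k *s (k *s u) = u" by simp
    thus False using vec.subspace_scale [OF V(1) ku, of "inverse k"] u by simp
  qed
qed

lemma card_independent_extensions_ge:
  fixes X E :: "('a::{finite,field} ^ 'n) set"
  defines "q \<equiv> real CARD('a)"
  assumes X: "vec.subspace X" and EX: "E \<subseteq> X" and ind: "vec.independent E"
    and t: "1 \<le> t" "t \<le> vec.dim X" "card E + s = t"
  shows "(q ^ t / 2) ^ s \<le> real (card {w. length w = s \<and> set w \<subseteq> X \<and> independent_extension E w})"
proof -
  have q: "q \<ge> 2" unfolding q_def using two_le_card_field [where 'a='a] by simp
  have "(q ^ t / 2) ^ s = (\<Prod>i<s. q ^ t / 2)" by simp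
  also have "\<dots> \<le> qfall q (real (card X)) (card E) s"
    unfolding qfall_def
  proof (rule prod_mono, rule conjI)
    fix i assume "i \<in> {..<s}"
    hence "q ^ (card E + i) \<le> q ^ (t - 1)" using t q by (intro power_increasing) auto
    moreover have "q ^ t = q * q ^ (t - 1)" using t(1) by (simp flip: power_Suc)
    moreover have "2 * q ^ (t - 1) \<le> q * q ^ (t - 1)" using q by (intro mult_right_mono) auto
    moreover have "q ^ t \<le> real (card X)"
      unfolding card_subspace [OF X] using t q by (simp add: q_def power_increasing)
    ultimately show "q ^ t / 2 \<le> real (card X) - q ^ (card E + i)" by linarith
    show "0 \<le> q ^ t / 2" using q by simp
  qed
  also have "\<dots> = real (card {w. length w = s \<and> set w \<subseteq> X \<and> independent_extension E w})"
    using card_independent_extensions [OF X EX ind] t unfolding q_def by simp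
  finally show ?thesis .
qed

lemma double_counting_le:
  fixes L U :: real
  assumes fin: "finite A" "finite T" and "A' \<subseteq> A"
    and lower: "\<And>a. a \<in> A' \<Longrightarrow> L \<le> real (card {t \<in> T. R a t})"
    and upper: "\<And>t. t \<in> T \<Longrightarrow> real (card {a \<in> A. R a t}) \<le> U"
  shows "real (card A') * L \<le> real (card T) * U"
proof -
  have "real (card A') * L \<le> (\<Sum>a\<in>A'. real (card {t \<in> T. R a t}))"
    using lower by (rule sum_bounded_below)
  also have "\<dots> \<le> (\<Sum>a\<in>A. real (card {t \<in> T. R a t}))"
    using assms by (intro sum_mono2) auto
  also have "\<dots> = (\<Sum>t\<in>T. real (card {a \<in> A. R a t}))"
    using sum.swap_restrict [OF fin, of "\<lambda>_ _. 1::real" R] by simp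
  also have "\<dots> \<le> real (card T) * U"
    using upper by (rule sum_bounded_above)
  finally show ?thesis .
qed

text \<open>First moment: if \<open>dim (C \<inter> V) \<ge> t\<close>, then \<open>C \<inter> V\<close> contains at least \<open>(q\<^sup>t/2)\<^sup>s\<close> independent
  extensions of length \<open>s\<close> of \<open>V \<inter> {1}\<close>, while each of them, being independent of \<open>1\<close>, lies in at most
  a \<open>q\<^sup>-\<^sup>r\<^sup>s\<close> fraction of the codes.\<close>
lemma card_codes_meeting_subspace_le:
  fixes V :: "('a::{finite,field} ^ 'n) set" and t :: nat
  defines "q \<equiv> real CARD('a)" and "s \<equiv> t - (if ones \<in> V then 1 else 0)"
  assumes r: "r < CARD('n)" and V: "vec.subspace V" and t: "1 \<le> t"
  shows "real (card {C \<in> codes_with_ones r. t \<le> vec.dim (C \<inter> V)}) * (q ^ t / 2) ^ s * q ^ (r * s)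
         \<le> real (card V) ^ s * real (card (codes_with_ones r :: ('a ^ 'n) set set))"
proof -
  define E :: "('a^'n) set" where "E = (if ones \<in> V then {ones} else {})"
  define Codes where "Codes = (codes_with_ones r :: ('a ^ 'n) set set)"
  define Ev where "Ev = {C \<in> Codes. t \<le> vec.dim (C \<inter> V)}"
  define T where "T = {w. length w = s \<and> set w \<subseteq> V \<and> independent_extension E w}"
  have q: "q \<ge> 2" unfolding q_def using two_le_card_field [where 'a='a] by simp
  have E: "vec.independent E" "E \<subseteq> V" "card E + s = t"
    using independent_ones [where 'a='a and 'n='n] vec.independent_empty t unfolding E_def s_def by auto
  have finCodes: "finite Codes" by (rule finite_subset [OF _ finite [of UNIV]]) auto
  have finT: "finite T"
    by (rule finite_subset [OF _ finite_lists_length_eq [OF finite [of UNIV], of s]]) (auto simp: T_def)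
  have T_ones: "independent_extension {ones} w" if "w \<in> T" for w
    using that independent_extension_insert [OF V, of "{}" w ones] unfolding T_def E_def
    by (cases "ones \<in> V") auto
  have lower: "(q ^ t / 2) ^ s \<le> real (card {w \<in> T. set w \<subseteq> C})" if "C \<in> Ev" for C
  proof -
    have C: "vec.subspace C" "ones \<in> C" using that unfolding Ev_def Codes_def codes_with_ones_def by auto
    have "{w \<in> T. set w \<subseteq> C} = {w. length w = s \<and> set w \<subseteq> C \<inter> V \<and> independent_extension E w}"
      unfolding T_def by auto
    moreover have "E \<subseteq> C \<inter> V" using C E(2) unfolding E_def by auto
    ultimately show ?thesis
      using card_independent_extensions_ge [OF vec.subspace_inter [OF C(1) V] _ E(1) t] E(3) that
      unfolding Ev_def q_def by auto
  qed
  have upper: "real (card {C \<in> Codes. set w \<subseteq> C}) \<le> real (card Codes) / q ^ (r * s)" if "w \<in> T" for w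
    using card_codes_containing_le [OF r T_ones [OF that]] that q
    unfolding T_def Codes_def q_def by (simp add: pos_le_divide_eq)
  have card_T: "card T \<le> card V ^ s"
  proof -
    have "card T \<le> card {w. set w \<subseteq> V \<and> length w = s}"
      by (rule card_mono [OF finite_lists_length_eq [OF finite [of V]]]) (auto simp: T_def)
    thus ?thesis by (simp add: card_lists_length_eq)
  qed
  have "real (card Ev) * (q ^ t / 2) ^ s \<le> real (card T) * (real (card Codes) / q ^ (r * s))"
    by (rule double_counting_le [OF finCodes finT _ lower upper]) (auto simp: Ev_def)
  hence "real (card Ev) * (q ^ t / 2) ^ s * q ^ (r * s) \<le> real (card T) * real (card Codes)"
    using q by (simp add: field_simps)
  also have "\<dots> \<le> real (card V) ^ s * real (card Codes)"
    using card_T by (intro mult_right_mono) (simp_all flip: of_nat_power)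
  finally show ?thesis unfolding Ev_def Codes_def .
qed

lemma span_support:
  fixes S :: "('a::field ^ 'n) set"
  assumes "x \<in> vec.span S" "x$i \<noteq> 0"
  obtains v where "v \<in> S" "v$i \<noteq> 0"
proof -
  have "x \<in> {x. \<forall>i. x$i \<noteq> 0 \<longrightarrow> (\<exists>v\<in>S. v$i \<noteq> 0)}"
  proof (rule vec.span_subspace_induct [OF assms(1)])
    show "vec.subspace {x. \<forall>i. x$i \<noteq> 0 \<longrightarrow> (\<exists>v\<in>S. v$i \<noteq> 0)}"
      unfolding vec.subspace_def by (auto, metis add.left_neutral)
  qed auto
  thus ?thesis using assms(2) that by auto
qed

text \<open>The supports of a spanning family of \<open>1\<close> cover all \<open>n\<close> coordinates.\<close>
lemma ones_in_span_length_ge: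
  fixes b :: "('a::field ^ 'n) list" and \<alpha> :: real
  assumes b: "\<forall>v\<in>set b. real (hweight v) \<le> \<alpha> * real CARD('n)" and \<alpha>: "0 \<le> \<alpha>"
    and ones: "ones \<in> vec.span (set b)"
  shows "1 \<le> real (length b) * \<alpha>"
proof -
  define N where "N = CARD('n)"
  have "(UNIV :: 'n set) \<subseteq> (\<Union>v\<in>set b. {i. v$i \<noteq> 0})"
  proof
    fix i :: 'n
    have "(ones :: 'a^'n) $ i \<noteq> 0" by simp
    then obtain v where "v \<in> set b" "v$i \<noteq> 0" by (rule span_support [OF ones])
    thus "i \<in> (\<Union>v\<in>set b. {i. v$i \<noteq> 0})" by auto
  qed
  hence "N \<le> card (\<Union>v\<in>set b. {i. v$i \<noteq> 0})" unfolding N_def by (rule card_mono [OF finite])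
  also have "\<dots> \<le> (\<Sum>v\<in>set b. hweight v)" unfolding hweight_def by (rule card_UN_le) simp
  finally have "real N \<le> (\<Sum>v\<in>set b. real (hweight v))" by (simp flip: of_nat_sum)
  also have "\<dots> \<le> real (card (set b)) * (\<alpha> * N)"
    using b sum_bounded_above [of "set b" "\<lambda>v. real (hweight v)" "\<alpha> * N"] unfolding N_def by simp
  also have "\<dots> \<le> real (length b) * (\<alpha> * N)"
    using \<alpha> card_length by (intro mult_right_mono) auto
  finally have "1 * real N \<le> (real (length b) * \<alpha>) * N" by (simp add: mult_ac)
  thus ?thesis unfolding N_def by (rule mult_right_le_imp_le) simp
qed

lemma exponent_inequality:
  fixes m r t s :: nat
  assumes m: "m \<le> r" and t: "t = (m + 1) div 2"
    and s: "s = t \<or> (s + 1 = t \<and> 9 \<le> m)"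
  shows "5 * real r * real m / 32 \<le> real s * (real r - real m + real t)"
proof -
  have t2: "real m \<le> 2 * real t" using t by linarith
  have K: "real r / 2 \<le> real r - real m + real t" using t2 m by simp
  from s show ?thesis
  proof
    assume "s = t"
    hence "(real m / 2) * (real r / 2) \<le> real s * (real r - real m + real t)"
      using t2 K by (intro mult_mono) auto
    moreover have "5 * real r * real m / 32 \<le> (real m / 2) * (real r / 2)" by simp
    ultimately show ?thesis by linarith
  next
    assume "s + 1 = t \<and> 9 \<le> m"
    hence "7 * real m / 18 \<le> real s" using t2 by linarith
    hence "(7 * real m / 18) * (real r / 2) \<le> real s * (real r - real m + real t)"
      using K by (intro mult_mono) auto
    moreover have "5 * real r * real m / 32 \<le> (7 * real m / 18) * (real r / 2)" by simp
    ultimately show ?thesis by linarith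
  qed
qed

lemma card_codes_meeting_span_le:
  fixes b :: "('a::{finite,field} ^ 'n) list"
  defines "q \<equiv> real CARD('a)" and "m \<equiv> length b"
  assumes r: "r < CARD('n)" and m: "1 \<le> m" "m \<le> r"
    and ones: "ones \<in> vec.span (set b) \<Longrightarrow> 9 \<le> m"
    and q_r: "2 \<le> q powr (real r / 64)"
  shows "real (card {C \<in> codes_with_ones r. (m + 1) div 2 \<le> vec.dim (C \<inter> vec.span (set b))})
         \<le> q powr (- 9 * real r * real m / 64) * real (card (codes_with_ones r :: ('a ^ 'n) set set))"
proof -
  define t where "t = (m + 1) div 2"
  define s where "s = t - (if ones \<in> vec.span (set b) then 1 else 0)"
  define ce where "ce = real (card {C \<in> codes_with_ones r. t \<le> vec.dim (C \<inter> vec.span (set b))})"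
  define cc where "cc = real (card (codes_with_ones r :: ('a ^ 'n) set set))"
  have q: "q \<ge> 2" unfolding q_def using two_le_card_field [where 'a='a] by simp
  have st: "s \<le> t" "t \<le> m" "1 \<le> t" using m unfolding s_def t_def by auto
  have "card (vec.span (set b)) \<le> CARD('a) ^ m"
    using card_span_le [of "set b"] card_length [of b] two_le_card_field [where 'a='a]
    unfolding m_def by (meson le_trans one_le_numeral power_increasing order_trans)
  hence "real (card (vec.span (set b))) ^ s \<le> (q ^ m) ^ s"
    unfolding q_def by (intro power_mono) (simp_all flip: of_nat_power)
  hence "ce * (q ^ t / 2) ^ s * q ^ (r * s) \<le> (q ^ m) ^ s * cc"
    using card_codes_meeting_subspace_le [OF r vec.subspace_span st(3), of "set b"]
    unfolding ce_def cc_def s_def q_def by (smt (verit) mult_right_mono of_nat_0_le_iff)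
  hence "ce * q powr (t * s) * q powr (r * s) \<le> 2 ^ s * q powr (m * s) * cc"
    using q by (simp add: power_divide field_simps powr_realpow flip: power_mult of_nat_mult)
  also have "\<dots> \<le> q powr (r * s / 64) * q powr (m * s) * cc"
  proof -
    have "(2::real) ^ s \<le> (q powr (r / 64)) ^ s" using q_r by (intro power_mono) auto
    also have "\<dots> = q powr (r * s / 64)" using q by (simp add: powr_powr flip: powr_realpow)
    finally show ?thesis unfolding cc_def by (intro mult_right_mono) auto
  qed
  finally have "ce \<le> q powr (r * s / 64) * q powr (m * s) * cc / (q powr (t * s) * q powr (r * s))"
    using q by (simp add: pos_le_divide_eq)
  also have "\<dots> = q powr (r * s / 64 + m * s - t * s - r * s) * cc"
  proof -
    have "q powr (r * s / 64 + m * s - t * s - r * s)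
        = q powr (r * s / 64) * q powr (m * s) / (q powr (t * s) * q powr (r * s))"
      by (simp only: diff_diff_eq powr_diff powr_add)
    thus ?thesis by simp
  qed
  also have "\<dots> \<le> q powr (- 9 * real r * real m / 64) * cc"
  proof -
    have "s = t \<or> (s + 1 = t \<and> 9 \<le> m)" using ones st unfolding s_def by auto
    hence "5 * real r * real m / 32 \<le> real s * (real r - real m + real t)"
      using m by (intro exponent_inequality) (auto simp: t_def)
    moreover have "real r * real s \<le> real r * real m" using st by (intro mult_left_mono) auto
    ultimately have "r * s / 64 + m * s - t * s - r * s \<le> - 9 * real r * real m / 64"
      by (simp add: algebra_simps)
    thus ?thesis using q unfolding cc_def by (intro mult_right_mono powr_mono) auto
  qed
  finally show ?thesis unfolding ce_def cc_def t_def .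
qed

lemma sparse_list_of_not_prop_star:
  fixes C :: "('a::{finite,field} ^ 'n) set"
  assumes "\<not> prop_star r C"
  obtains b where "length b \<in> {1..r}"
    and "\<forall>v\<in>set b. real (hweight v)
           \<le> qentropy_inv (real CARD('a)) (real r / (8 * real CARD('n))) * real CARD('n)"
    and "(length b + 1) div 2 \<le> vec.dim (C \<inter> vec.span (set b))"
proof -
  define \<alpha> where "\<alpha> = qentropy_inv (real CARD('a)) (real r / (8 * real CARD('n)))"
  from assms obtain m V where m: "m \<in> {1..r}"
    and V: "vec.subspace V" "vec.dim V = m" "sparse_subspace \<alpha> V"
    and meet: "\<not> real (vec.dim (C \<inter> V)) < real m / 2"
    unfolding prop_star_def Let_def \<alpha>_def by auto
  obtain S where S: "V = vec.span S" "\<forall>v\<in>S. real (hweight v) \<le> \<alpha> * real CARD('n)"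
    using V(3) unfolding sparse_subspace_def by blast
  obtain B where B: "B \<subseteq> S" "vec.independent B" "S \<subseteq> vec.span B"
    using vec.maximal_independent_subset by blast
  have span_B: "vec.span B = V"
    using B S(1) by (metis subset_antisym vec.span_mono vec.span_span)
  have "finite B" using B(2) vec.independent_bound_general by blast
  then obtain b where b: "set b = B" "distinct b" using finite_distinct_list by blast
  have "length b = m"
    using b distinct_card vec.dim_span_eq_card_independent [OF B(2)] span_B V(2) by metis
  moreover have "(m + 1) div 2 \<le> vec.dim (C \<inter> V)" using meet by linarith
  ultimately show ?thesis
    using that m B(1) S(2) b(1) span_B unfolding \<alpha>_def by auto
qed

lemma sum_card_codes_meeting_spans_le:
  fixes B :: "('a::{finite,field} ^ 'n) set"
  defines "q \<equiv> real CARD('a)"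
  assumes r: "r < CARD('n)" and m: "1 \<le> m" "m \<le> r"
    and B: "real (card B) \<le> q powr (real r / 8)"
    and B_ones: "\<And>b. set b \<subseteq> B \<Longrightarrow> ones \<in> vec.span (set b) \<Longrightarrow> 9 \<le> length b"
    and q_r: "2 \<le> q powr (real r / 64)"
  shows "(\<Sum>b\<in>{b. set b \<subseteq> B \<and> length b = m}.
            real (card {C \<in> codes_with_ones r. (m + 1) div 2 \<le> vec.dim (C \<inter> vec.span (set b))}))
         \<le> (q powr (- real r / 64)) ^ m * real (card (codes_with_ones r :: ('a ^ 'n) set set))"
proof -
  define cc where "cc = real (card (codes_with_ones r :: ('a ^ 'n) set set))"
  have q: "q \<ge> 2" unfolding q_def using two_le_card_field [where 'a='a] by simp
  have "(\<Sum>b\<in>{b. set b \<subseteq> B \<and> length b = m}.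
            real (card {C \<in> codes_with_ones r. (m + 1) div 2 \<le> vec.dim (C \<inter> vec.span (set b))}))
        \<le> real (card {b. set b \<subseteq> B \<and> length b = m}) * (q powr (- 9 * real r * real m / 64) * cc)"
    using card_codes_meeting_span_le [OF r _ _ _ q_r [unfolded q_def]] m B_ones
    unfolding q_def cc_def by (intro sum_bounded_above) auto
  also have "\<dots> \<le> q powr (real r * real m / 8) * (q powr (- 9 * real r * real m / 64) * cc)"
  proof (rule mult_right_mono)
    have "real (card {b. set b \<subseteq> B \<and> length b = m}) = real (card B) ^ m"
      by (simp add: card_lists_length_eq)
    also have "\<dots> \<le> (q powr (real r / 8)) ^ m" by (rule power_mono [OF B]) simp
    also have "\<dots> = q powr (real r * real m / 8)" using q by (simp add: powr_powr flip: powr_realpow)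
    finally show "real (card {b. set b \<subseteq> B \<and> length b = m}) \<le> q powr (real r * real m / 8)" .
  qed (simp add: cc_def)
  also have "\<dots> = q powr (real r * real m / 8 + - 9 * real r * real m / 64) * cc"
    by (simp only: powr_add mult.assoc)
  also have "\<dots> = (q powr (- real r / 64)) ^ m * cc"
    using q by (simp add: powr_powr field_simps flip: powr_realpow)
  finally show ?thesis unfolding cc_def .
qed

lemma sparsity_threshold_bounds:
  fixes r :: nat
  defines "\<alpha> \<equiv> qentropy_inv (real CARD('a::{finite,field})) (real r / (8 * real CARD('n)))"
  assumes r: "1 \<le> r" "r < CARD('n)"
  shows "0 < \<alpha>" and "\<alpha> < 1/8"
    and "real (card {v::'a^'n. real (hweight v) \<le> \<alpha> * real CARD('n)}) \<le> real CARD('a) powr (real r / 8)"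
proof -
  define q where "q = real CARD('a)"
  define y where "y = real r / (8 * real CARD('n))"
  have q: "q \<ge> 2" unfolding q_def using two_le_card_field [where 'a='a] by simp
  have y: "0 < y" "y < 1/8" using r unfolding y_def by (auto simp: field_simps)
  have \<alpha>_eq: "\<alpha> = qentropy_inv q y" unfolding \<alpha>_def q_def y_def ..
  show "0 < \<alpha>" "\<alpha> < 1/8"
    using qentropy_inv_pos_le [OF q y(1)] y unfolding \<alpha>_eq by auto
  have "\<alpha> \<le> 1 - 1/q" "qentropy q \<alpha> = y"
    using qentropy_inv_spec [OF q, of y] y unfolding \<alpha>_eq by auto
  with \<open>0 < \<alpha>\<close> show "real (card {v::'a^'n. real (hweight v) \<le> \<alpha> * real CARD('n)}) \<le> real CARD('a) powr (real r / 8)"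
    using card_hamming_ball_le [where 'a='a and 'n='n, of \<alpha>] r unfolding q_def y_def by simp
qed

lemma sum_power_le:
  fixes x :: real
  assumes "0 \<le> x" "x < 1"
  shows "(\<Sum>m\<in>{1..r}. x ^ m) \<le> x / (1 - x)"
proof (cases "r = 0")
  case False
  hence "(1 - x) * (\<Sum>m\<in>{1..r}. x ^ m) \<le> x"
    using sum_gp_multiplied [of 1 r x] assms by simp
  thus ?thesis using assms by (simp add: field_simps)
qed (use assms in simp)

lemma card_codes_not_prop_star_le:
  fixes r :: nat
  defines "x \<equiv> real CARD('a::{finite,field}) powr (- real r / 64)"
  assumes r: "1 \<le> r" "r < CARD('n)" and x: "x \<le> 1/2"
  shows "real (card {C \<in> (codes_with_ones r :: ('a ^ 'n) set set). \<not> prop_star r C})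
         \<le> x / (1 - x) * real (card (codes_with_ones r :: ('a ^ 'n) set set))"
proof -
  define q where "q = real CARD('a)"
  define \<alpha> where "\<alpha> = qentropy_inv q (real r / (8 * real CARD('n)))"
  define Codes where "Codes = (codes_with_ones r :: ('a ^ 'n) set set)"
  define B where "B = {v::'a^'n. real (hweight v) \<le> \<alpha> * real CARD('n)}"
  define L where "L m = {b. set b \<subseteq> B \<and> length b = m}" for m
  define Ev where "Ev b = {C \<in> Codes. (length b + 1) div 2 \<le> vec.dim (C \<inter> vec.span (set b))}" for b
  have q: "q \<ge> 2" unfolding q_def using two_le_card_field [where 'a='a] by simp
  have x0: "0 < x" unfolding x_def using q by simp
  have "q powr (real r / 64) = inverse x" unfolding x_def q_def by (simp add: powr_minus)
  hence q_r: "2 \<le> q powr (real r / 64)"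
    using le_imp_inverse_le [OF x x0] by simp
  have \<alpha>: "0 < \<alpha>" "\<alpha> < 1/8" and card_B: "real (card B) \<le> q powr (real r / 8)"
    using sparsity_threshold_bounds [where 'a='a and 'n='n, OF r] unfolding \<alpha>_def B_def q_def by auto
  have B_ones: "9 \<le> length b" if "set b \<subseteq> B" "ones \<in> vec.span (set b)" for b
  proof (rule ccontr)
    assume "\<not> 9 \<le> length b"
    hence "real (length b) * \<alpha> \<le> 8 * \<alpha>" using \<alpha>(1) by (intro mult_right_mono) auto
    moreover have "1 \<le> real (length b) * \<alpha>"
      using ones_in_span_length_ge [where \<alpha>=\<alpha>] that \<alpha>(1) unfolding B_def by auto
    ultimately show False using \<alpha>(2) by linarith
  qed
  have "{C \<in> Codes. \<not> prop_star r C} \<subseteq> (\<Union>m\<in>{1..r}. \<Union>b\<in>L m. Ev b)"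
  proof
    fix C assume C: "C \<in> {C \<in> Codes. \<not> prop_star r C}"
    hence "\<not> prop_star r C" by simp
    then obtain b where b: "length b \<in> {1..r}"
        "\<forall>v\<in>set b. real (hweight v) \<le> qentropy_inv (real CARD('a)) (real r / (8 * real CARD('n))) * real CARD('n)"
        "(length b + 1) div 2 \<le> vec.dim (C \<inter> vec.span (set b))"
      by (rule sparse_list_of_not_prop_star)
    have "b \<in> L (length b)" using b(2) unfolding L_def B_def \<alpha>_def q_def by auto
    moreover have "C \<in> Ev b" using C b(3) unfolding Ev_def by simp
    ultimately show "C \<in> (\<Union>m\<in>{1..r}. \<Union>b\<in>L m. Ev b)" using b(1) by blast
  qed
  moreover have fin_L: "finite (L m)" for m
    unfolding L_def by (rule finite_lists_length_eq) simp
  ultimately have "card {C \<in> Codes. \<not> prop_star r C} \<le> card (\<Union>m\<in>{1..r}. \<Union>b\<in>L m. Ev b)"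
    by (intro card_mono) auto
  also have "\<dots> \<le> (\<Sum>m\<in>{1..r}. card (\<Union>b\<in>L m. Ev b))" by (rule card_UN_le) simp
  also have "\<dots> \<le> (\<Sum>m\<in>{1..r}. \<Sum>b\<in>L m. card (Ev b))"
    by (intro sum_mono card_UN_le fin_L)
  finally have "real (card {C \<in> Codes. \<not> prop_star r C}) \<le> (\<Sum>m\<in>{1..r}. \<Sum>b\<in>L m. real (card (Ev b)))"
    by (simp flip: of_nat_sum)
  also have "\<dots> \<le> (\<Sum>m\<in>{1..r}. x ^ m * real (card Codes))"
  proof (rule sum_mono)
    fix m assume "m \<in> {1..r}"
    thus "(\<Sum>b\<in>L m. real (card (Ev b))) \<le> x ^ m * real (card Codes)"
      using sum_card_codes_meeting_spans_le [where m=m, OF r(2) _ _ card_B [unfolded q_def] B_ones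
          q_r [unfolded q_def]]
      unfolding L_def Ev_def Codes_def x_def by simp
  qed
  also have "\<dots> \<le> x / (1 - x) * real (card Codes)"
  proof -
    have "(\<Sum>m\<in>{1..r}. x ^ m) \<le> x / (1 - x)" using x x0 by (intro sum_power_le) auto
    from mult_right_mono [OF this, of "real (card Codes)"] show ?thesis by (simp add: sum_distrib_right)
  qed
  finally show ?thesis unfolding Codes_def .
qed

theorem lemma5p9:
  fixes r :: nat
  assumes "CARD('n) \<ge> 2"
    and "1 \<le> r" and "r \<le> CARD('n) - 1"
  shows "real (card {C \<in> (codes_with_ones r :: ('a::{finite,field} ^ 'n) set set). prop_star r C})
           / real (card (codes_with_ones r :: ('a ^ 'n) set set))
         \<ge> 1 - 4 * real CARD('a) powr (- real r / 64) / (1 - real CARD('a) powr (- real r / 64))"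
proof -
  define x where "x = real CARD('a) powr (- real r / 64)"
  define Codes where "Codes = (codes_with_ones r :: ('a ^ 'n) set set)"
  have r: "1 \<le> r" "r < CARD('n)" using assms by auto
  have x: "0 < x" "x < 1" unfolding x_def using assms two_le_card_field [where 'a='a]
    by (auto intro!: powr_less_one)
  have pos: "0 < card Codes" unfolding Codes_def by (rule card_codes_with_ones_pos [OF r(2)])
  have fin: "finite Codes" by (rule finite_subset [OF _ finite [of UNIV]]) simp
  have "{C \<in> Codes. prop_star r C} = Codes - {C \<in> Codes. \<not> prop_star r C}" by auto
  hence "card {C \<in> Codes. prop_star r C} = card Codes - card {C \<in> Codes. \<not> prop_star r C}"
    using fin by (simp add: card_Diff_subset)
  hence split: "real (card {C \<in> Codes. prop_star r C}) / card Codes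
      = 1 - real (card {C \<in> Codes. \<not> prop_star r C}) / card Codes"
    using pos fin by (auto simp: of_nat_diff card_mono divide_simps)
  show ?thesis
  proof (cases "x \<le> 1/2")
    case True
    hence "real (card {C \<in> Codes. \<not> prop_star r C}) / card Codes \<le> x / (1 - x)"
      using card_codes_not_prop_star_le [where 'a='a and 'n='n, OF r] pos
      unfolding x_def Codes_def by (simp add: divide_simps)
    moreover have "x / (1 - x) \<le> 4 * x / (1 - x)" using x by (simp add: divide_right_mono)
    ultimately show ?thesis using split unfolding x_def Codes_def by linarith
  next
    case False
    hence "1 - 4 * x / (1 - x) \<le> 0" using x by (simp add: field_simps)
    thus ?thesis unfolding x_def Codes_def by (smt (verit) divide_nonneg_nonneg of_nat_0_le_iff)
  qed
qed

end
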